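(* Let $$L=D_xD_y(D_x+D_y)+a_{20}D_x^2+a_{11}D_xD_y+a_{02}D_y^2+a_{10}D_x+a_{01}D_y+a_{00},$$ with all $a_{ij}\in K$, and put $s_2=a_{20}-a_{11}+a_{02}$. Then the common obstacle to factorization of $L$ of type $(X)(Y)(X+Y)$ is $$\big(a_{10}-a_{20}a_{11}+a_{20}^2-\partial_x(a_{20})+\partial_y(s_2)\big)D_x+\big(a_{01}-a_{02}a_{11}+a_{02}^2+\partial_x(a_{02}-a_{11})\big)D_y+a_{00}+a_{20}a_{02}s_2+s_2\partial_x(a_{20})+a_{20}\partial_x(s_2)+\partial_x\partial_y(s_2)+a_{02}\partial_y(s_2).$$
   Context: $K$ is a field with two commuting derivations $\partial_x,\partial_y$, and $K[D_x,D_y]$ is the ring of linear differential operators over $K$: $D_xD_y=D_yD_x$, $D_x\circ f=fD_x+\partial_x(f)$ and $D_y\circ f=fD_y+\partial_y(f)$ for $f\in K$. For an operator $M=\sum m_{ij}D_x^iD_y^j$, $\operatorname{ord}(M)$ is the largest $i+j$ with $m_{ij}\ne0$ ($\operatorname{ord}(0)=-\infty$), and the symbol is $\operatorname{Sym}_M=\sum_{i+j=\operatorname{ord}M}m_{ij}X^iY^j$. A factorization of type $(S_1)(S_2)(S_3)$ of $M$ is $M=F_1\circ F_2\circ F_3$ with $\operatorname{Sym}_{F_i}=S_i$. A common obstacle to factorization of $L$ of that type is an operator $R$ such that $L-R$ has such a factorization and $R$ has minimal possible order among such operators. *)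

theory Defs
  imports Complex_Main "HOL-Library.Extended_Real"
begin

text \<open>A linear differential operator sum m_ij Dx^i Dy^j over K is represented by its
coefficient function m :: nat => nat => 'a, required to be finitely supported.\<close>

definition is_derivation :: "('a::field \<Rightarrow> 'a) \<Rightarrow> bool" where
  "is_derivation d \<longleftrightarrow> (\<forall>a b. d (a + b) = d a + d b) \<and> (\<forall>a b. d (a * b) = a * d b + d a * b)"

definition op_supp :: "(nat \<Rightarrow> nat \<Rightarrow> 'a::zero) \<Rightarrow> (nat \<times> nat) set" where
  "op_supp M = {(i, j). M i j \<noteq> 0}"

definition op_fin :: "(nat \<Rightarrow> nat \<Rightarrow> 'a::zero) \<Rightarrow> bool" where
  "op_fin M \<longleftrightarrow> finite (op_supp M)"

text \<open>Composition in K[Dx,Dy]: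
  (Dx^i Dy^j) o b = sum_{r<=i, s<=j} C(i,r) C(j,s) dx^r dy^s (b) Dx^(i-r) Dy^(j-s).\<close>
definition op_mul :: "('a::field \<Rightarrow> 'a) \<Rightarrow> ('a \<Rightarrow> 'a) \<Rightarrow>
    (nat \<Rightarrow> nat \<Rightarrow> 'a) \<Rightarrow> (nat \<Rightarrow> nat \<Rightarrow> 'a) \<Rightarrow> (nat \<Rightarrow> nat \<Rightarrow> 'a)" where
  "op_mul dx dy A B = (\<lambda>p q.
     \<Sum>(i, j)\<in>op_supp A. \<Sum>(k, l)\<in>op_supp B. \<Sum>r\<le>i. \<Sum>s\<le>j.
       (if i - r + k = p \<and> j - s + l = q
        then of_nat (i choose r) * of_nat (j choose s) * A i j * (dx ^^ r) ((dy ^^ s) (B k l))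
        else 0))"

definition op_ord :: "(nat \<Rightarrow> nat \<Rightarrow> 'a::zero) \<Rightarrow> ereal" where
  "op_ord M = (if op_supp M = {} then MInfty
               else ereal (real (Max ((\<lambda>(i, j). i + j) ` op_supp M))))"

text \<open>Symbol: the homogeneous top-order part, as coefficient function of a polynomial in X, Y.\<close>
definition op_sym :: "(nat \<Rightarrow> nat \<Rightarrow> 'a::zero) \<Rightarrow> (nat \<Rightarrow> nat \<Rightarrow> 'a)" where
  "op_sym M = (\<lambda>i j. if ereal (real (i + j)) = op_ord M then M i j else 0)"

definition has_factorization3 ::
  "('a::field \<Rightarrow> 'a) \<Rightarrow> ('a \<Rightarrow> 'a) \<Rightarrow> (nat \<Rightarrow> nat \<Rightarrow> 'a) \<Rightarrow>
   (nat \<Rightarrow> nat \<Rightarrow> 'a) \<Rightarrow> (nat \<Rightarrow> nat \<Rightarrow> 'a) \<Rightarrow> (nat \<Rightarrow> nat \<Rightarrow> 'a) \<Rightarrow> bool" where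
  "has_factorization3 dx dy M S1 S2 S3 \<longleftrightarrow>
     (\<exists>F1 F2 F3. op_fin F1 \<and> op_fin F2 \<and> op_fin F3 \<and>
        M = op_mul dx dy (op_mul dx dy F1 F2) F3 \<and>
        op_sym F1 = S1 \<and> op_sym F2 = S2 \<and> op_sym F3 = S3)"

definition is_common_obstacle3 ::
  "('a::field \<Rightarrow> 'a) \<Rightarrow> ('a \<Rightarrow> 'a) \<Rightarrow> (nat \<Rightarrow> nat \<Rightarrow> 'a) \<Rightarrow>
   (nat \<Rightarrow> nat \<Rightarrow> 'a) \<Rightarrow> (nat \<Rightarrow> nat \<Rightarrow> 'a) \<Rightarrow> (nat \<Rightarrow> nat \<Rightarrow> 'a) \<Rightarrow>
   (nat \<Rightarrow> nat \<Rightarrow> 'a) \<Rightarrow> bool" where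
  "is_common_obstacle3 dx dy L S1 S2 S3 R \<longleftrightarrow>
     op_fin R \<and> has_factorization3 dx dy (L - R) S1 S2 S3 \<and>
     (\<forall>R'. op_fin R' \<and> has_factorization3 dx dy (L - R') S1 S2 S3 \<longrightarrow> op_ord R \<le> op_ord R')"

definition symX :: "nat \<Rightarrow> nat \<Rightarrow> 'a::{zero,one}" where
  "symX = (\<lambda>i j. if i = 1 \<and> j = 0 then 1 else 0)"
definition symY :: "nat \<Rightarrow> nat \<Rightarrow> 'a::{zero,one}" where
  "symY = (\<lambda>i j. if i = 0 \<and> j = 1 then 1 else 0)"
definition symXY :: "nat \<Rightarrow> nat \<Rightarrow> 'a::{zero,one}" where
  "symXY = (\<lambda>i j. if (i = 1 \<and> j = 0) \<or> (i = 0 \<and> j = 1) then 1 else 0)"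

end

theory Submission imports Defs begin

text \<open>By finiteness of support, an operator with symbol X, Y or X + Y is Dx + c, Dy + c or
  Dx + Dy + c. Hence the operators of type (X)(Y)(X+Y) are exactly the products
  (Dx + c1)(Dy + c2)(Dx + Dy + c3), whose second-order part c2 Dx^2 + (c1 + c2 + c3) Dx Dy + c1 Dy^2
  determines c1, c2, c3. Taking c1 = a02, c2 = a20, c3 = -s2 matches the top two orders of L and
  leaves the stated first-order remainder; any other remainder of order at most 1 forces the same
  factors, so it coincides with it, and all others have order at least 2.\<close>

lemma derivation_simps:
  assumes "is_derivation d"
  shows "d (a + b) = d a + d b" "d (a * b) = a * d b + d a * b" "d 0 = 0"
        "d (- a) = - d a" "d (a - b) = d a - d b" "d 1 = 0"
proof -
  have add: "d (u + v) = d u + d v" and mult: "d (u * v) = u * d v + d u * v" for u v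
    using assms unfolding is_derivation_def by blast+
  show "d (a + b) = d a + d b" "d (a * b) = a * d b + d a * b" by (fact add mult)+
  show zero: "d 0 = 0" using mult[of 0 0] by simp
  show uminus: "d (- a) = - d a" for a using add[of "- a" a] zero by (simp add: eq_neg_iff_add_eq_0)
  show "d (a - b) = d a - d b" using add[of a "- b"] uminus[of b] by simp
  show "d 1 = 0" using mult[of 1 1] by (metis add_cancel_right_right mult_1 mult_1_right)
qed

lemma funpow_fixes_zero:
  fixes d :: "'a::zero \<Rightarrow> 'a"
  shows "d 0 = 0 \<Longrightarrow> (d ^^ n) 0 = 0"
  by (induction n) simp_all

lemma op_fin_subset: "op_supp M \<subseteq> A \<Longrightarrow> finite A \<Longrightarrow> op_fin M"
  unfolding op_fin_def by (rule finite_subset)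

lemma op_mul_eq_sum_over_supersets:
  fixes dx dy :: "'a::field \<Rightarrow> 'a"
  assumes "finite S" "op_supp A \<subseteq> S" "finite T" "op_supp B \<subseteq> T" "dx 0 = 0" "dy 0 = 0"
  shows "op_mul dx dy A B = (\<lambda>p q. \<Sum>(i, j)\<in>S. \<Sum>(k, l)\<in>T. \<Sum>r\<le>i. \<Sum>s\<le>j.
       (if i - r + k = p \<and> j - s + l = q
        then of_nat (i choose r) * of_nat (j choose s) * A i j * (dx ^^ r) ((dy ^^ s) (B k l))
        else 0))"
proof (intro ext)
  fix p q
  let ?f = "\<lambda>(i,j) (k,l). \<Sum>r\<le>i. \<Sum>s\<le>j.
       (if i - r + k = p \<and> j - s + l = q
        then of_nat (i choose r) * of_nat (j choose s) * A i j * (dx ^^ r) ((dy ^^ s) (B k l))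
        else (0::'a))"
  have inner: "(\<Sum>x\<in>op_supp B. ?f y x) = (\<Sum>x\<in>T. ?f y x)" for y
  proof (rule sum.mono_neutral_left[OF assms(3,4)], rule ballI)
    fix x assume "x \<in> T - op_supp B"
    then have "B (fst x) (snd x) = 0" by (auto simp: op_supp_def)
    moreover have "(dx ^^ r) ((dy ^^ s) 0) = 0" for r s
      using assms(5,6) by (simp add: funpow_fixes_zero)
    ultimately show "?f y x = 0"
      by (auto split: prod.splits intro!: sum.neutral)
  qed
  have outer: "(\<Sum>y\<in>op_supp A. \<Sum>x\<in>T. ?f y x) = (\<Sum>y\<in>S. \<Sum>x\<in>T. ?f y x)"
  proof (rule sum.mono_neutral_left[OF assms(1,2)], rule ballI)
    fix y assume "y \<in> S - op_supp A"
    then have "A (fst y) (snd y) = 0" by (auto simp: op_supp_def)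
    then show "(\<Sum>x\<in>T. ?f y x) = 0"
      by (auto split: prod.splits intro!: sum.neutral)
  qed
  show "op_mul dx dy A B p q = (\<Sum>(i, j)\<in>S. \<Sum>(k, l)\<in>T. \<Sum>r\<le>i. \<Sum>s\<le>j.
       (if i - r + k = p \<and> j - s + l = q
        then of_nat (i choose r) * of_nat (j choose s) * A i j * (dx ^^ r) ((dy ^^ s) (B k l))
        else 0))"
    unfolding op_mul_def using inner outer by (simp add: split_def)
qed

lemma op_ord_ge_coeff:
  assumes "op_fin M" "M i j \<noteq> 0"
  shows "ereal (real (i + j)) \<le> op_ord M"
proof -
  have ij: "(i, j) \<in> op_supp M" using assms(2) by (simp add: op_supp_def)
  have "i + j \<le> Max ((\<lambda>(i, j). i + j) ` op_supp M)"
    using assms(1) ij unfolding op_fin_def by (intro Max_ge) force+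
  with ij show ?thesis by (auto simp: op_ord_def)
qed

lemma op_ord_le_bound:
  assumes "op_fin M" "\<And>i j. M i j \<noteq> 0 \<Longrightarrow> i + j \<le> n"
  shows "op_ord M \<le> ereal (real n)"
proof (cases "op_supp M = {}")
  case False
  have "Max ((\<lambda>(i, j). i + j) ` op_supp M) \<le> n"
    using assms False unfolding op_fin_def by (subst Max_le_iff) (auto simp: op_supp_def)
  with False show ?thesis by (simp add: op_ord_def)
qed (simp add: op_ord_def)

definition first_order_op :: "'a \<Rightarrow> 'a \<Rightarrow> 'a \<Rightarrow> nat \<Rightarrow> nat \<Rightarrow> 'a::zero" where
  "first_order_op a b c = (\<lambda>i j. if (i, j) = (1, 0) then a else if (i, j) = (0, 1) then b
                        else if (i, j) = (0, 0) then c else 0)"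

lemma op_fin_first_order_op: "op_fin (first_order_op a b c)"
  by (rule op_fin_subset[where A = "{(0, 0), (1, 0), (0, 1)}"])
     (auto simp: op_supp_def first_order_op_def split: if_splits)

lemma op_ord_first_order_op:
  assumes "a \<noteq> 0 \<or> b \<noteq> 0"
  shows "op_ord (first_order_op a b c) = 1"
proof (rule antisym)
  show "op_ord (first_order_op a b c) \<le> 1"
    using op_ord_le_bound[OF op_fin_first_order_op, of a b c 1]
    by (fastforce simp: first_order_op_def one_ereal_def split: if_splits)
  have "first_order_op a b c 1 0 \<noteq> 0 \<or> first_order_op a b c 0 1 \<noteq> 0"
    using assms by (simp add: first_order_op_def)
  then show "1 \<le> op_ord (first_order_op a b c)"
    using op_ord_ge_coeff[OF op_fin_first_order_op, of a b c 1 0] op_ord_ge_coeff[OF op_fin_first_order_op, of a b c 0 1]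
    by (auto simp: one_ereal_def)
qed

lemma op_sym_first_order_op:
  assumes "a \<noteq> 0 \<or> b \<noteq> 0"
  shows "op_sym (first_order_op a b c) = first_order_op a b 0"
  using op_ord_first_order_op[OF assms] by (auto simp: fun_eq_iff op_sym_def first_order_op_def one_ereal_def)

lemma eq_first_order_op_if_op_sym_eq:
  fixes F :: "nat \<Rightarrow> nat \<Rightarrow> 'a::zero"
  assumes "op_fin F" "op_sym F = first_order_op a b 0" "a \<noteq> 0 \<or> b \<noteq> 0"
  shows "F = first_order_op a b (F 0 0)"
proof -
  have "op_sym F 1 0 \<noteq> 0 \<or> op_sym F 0 1 \<noteq> 0"
    using assms(2,3) by (simp add: first_order_op_def)
  then have ord: "op_ord F = 1" by (auto simp: op_sym_def one_ereal_def split: if_splits)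
  have high: "F i j = 0" if "2 \<le> i + j" for i j
    using op_ord_ge_coeff[OF assms(1), of i j] that ord by (force simp: one_ereal_def)
  have "F i j = first_order_op a b 0 i j" if "i + j = 1" for i j
    using that ord fun_cong[OF fun_cong[OF assms(2)], of i j] by (simp add: op_sym_def one_ereal_def)
  moreover have "2 \<le> i + j \<or> (i, j) = (0, 0) \<or> i + j = 1" for i j :: nat by auto
  ultimately show ?thesis using high by (fastforce simp: fun_eq_iff first_order_op_def)
qed

lemma sym_eq_first_order_op: "symX = first_order_op 1 0 0" "symY = first_order_op 0 1 0" "symXY = first_order_op 1 1 0"
  by (auto simp: fun_eq_iff symX_def symY_def symXY_def first_order_op_def)

text \<open>The operators (Dx + c1) o (Dy + c2) and (Dx + c1) o (Dy + c2) o (Dx + Dy + c3).\<close>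
definition mul_X_Y :: "('a::field \<Rightarrow> 'a) \<Rightarrow> 'a \<Rightarrow> 'a \<Rightarrow> nat \<Rightarrow> nat \<Rightarrow> 'a" where
  "mul_X_Y dx c1 c2 = (\<lambda>i j. if (i, j) = (1, 1) then 1 else if (i, j) = (1, 0) then c2
     else if (i, j) = (0, 1) then c1 else if (i, j) = (0, 0) then dx c2 + c1 * c2 else 0)"

definition mul_X_Y_XY :: "('a::field \<Rightarrow> 'a) \<Rightarrow> ('a \<Rightarrow> 'a) \<Rightarrow> 'a \<Rightarrow> 'a \<Rightarrow> 'a \<Rightarrow> nat \<Rightarrow> nat \<Rightarrow> 'a" where
  "mul_X_Y_XY dx dy c1 c2 c3 = (\<lambda>i j. if (i, j) = (2, 1) then 1 else if (i, j) = (1, 2) then 1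
     else if (i, j) = (2, 0) then c2 else if (i, j) = (0, 2) then c1
     else if (i, j) = (1, 1) then c3 + c2 + c1
     else if (i, j) = (1, 0) then dy c3 + c2 * c3 + (dx c2 + c1 * c2)
     else if (i, j) = (0, 1) then dx c3 + c1 * c3 + (dx c2 + c1 * c2)
     else if (i, j) = (0, 0) then dx (dy c3) + c2 * dx c3 + c1 * dy c3 + (dx c2 + c1 * c2) * c3
     else 0)"

lemma atMost_0_1_sum: "sum f {..0::nat} = f 0" "sum f {..Suc 0} = f 0 + f (Suc 0)"
  by (simp_all add: atMost_Suc add.commute)

lemma op_mul_X_Y:
  fixes dx dy :: "'a::field \<Rightarrow> 'a"
  assumes "is_derivation dx" "is_derivation dy"
  shows "op_mul dx dy (first_order_op 1 0 c1) (first_order_op 0 1 c2) = mul_X_Y dx c1 c2"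
  apply (subst op_mul_eq_sum_over_supersets[where S = "{(0, 0), (1, 0)}" and T = "{(0, 0), (0, 1)}"])
  by (auto simp: fun_eq_iff op_supp_def first_order_op_def mul_X_Y_def atMost_0_1_sum
      derivation_simps assms split: if_splits)

lemma op_mul_X_Y_XY:
  fixes dx dy :: "'a::field \<Rightarrow> 'a"
  assumes "is_derivation dx" "is_derivation dy"
  shows "op_mul dx dy (mul_X_Y dx c1 c2) (first_order_op 1 1 c3) = mul_X_Y_XY dx dy c1 c2 c3"
  apply (subst op_mul_eq_sum_over_supersets
      [where S = "{(0, 0), (1, 0), (0, 1), (1, 1)}" and T = "{(0, 0), (1, 0), (0, 1)}"])
  by (auto simp: fun_eq_iff op_supp_def first_order_op_def mul_X_Y_def mul_X_Y_XY_def atMost_0_1_sum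
      derivation_simps assms algebra_simps split: if_splits)

lemma has_factorization3_X_Y_XY_iff:
  fixes dx dy :: "'a::field \<Rightarrow> 'a"
  assumes "is_derivation dx" "is_derivation dy"
  shows "has_factorization3 dx dy M symX symY symXY \<longleftrightarrow>
         (\<exists>c1 c2 c3. M = mul_X_Y_XY dx dy c1 c2 c3)"
proof
  assume "has_factorization3 dx dy M symX symY symXY"
  then obtain F1 F2 F3 where fin: "op_fin F1" "op_fin F2" "op_fin F3"
    and M: "M = op_mul dx dy (op_mul dx dy F1 F2) F3"
    and sym: "op_sym F1 = first_order_op 1 0 0" "op_sym F2 = first_order_op 0 1 0" "op_sym F3 = first_order_op 1 1 0"
    unfolding has_factorization3_def sym_eq_first_order_op by blast
  have "F1 = first_order_op 1 0 (F1 0 0)" "F2 = first_order_op 0 1 (F2 0 0)" "F3 = first_order_op 1 1 (F3 0 0)"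
    using fin sym by (auto intro: eq_first_order_op_if_op_sym_eq)
  then have "M = mul_X_Y_XY dx dy (F1 0 0) (F2 0 0) (F3 0 0)"
    using M op_mul_X_Y[OF assms] op_mul_X_Y_XY[OF assms] by metis
  then show "\<exists>c1 c2 c3. M = mul_X_Y_XY dx dy c1 c2 c3" by blast
next
  assume "\<exists>c1 c2 c3. M = mul_X_Y_XY dx dy c1 c2 c3"
  then obtain c1 c2 c3 where "M = mul_X_Y_XY dx dy c1 c2 c3" by blast
  then have "M = op_mul dx dy (op_mul dx dy (first_order_op 1 0 c1) (first_order_op 0 1 c2)) (first_order_op 1 1 c3)"
    by (simp add: op_mul_X_Y[OF assms] op_mul_X_Y_XY[OF assms])
  then show "has_factorization3 dx dy M symX symY symXY"
    unfolding has_factorization3_def sym_eq_first_order_op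
    by (intro exI conjI) (auto simp: op_fin_first_order_op op_sym_first_order_op)
qed

lemma mul_X_Y_XY_eq_if_second_order_eq:
  assumes "\<And>i j. i + j = 2 \<Longrightarrow> mul_X_Y_XY dx dy c1 c2 c3 i j = mul_X_Y_XY dx dy c1' c2' c3' i j"
  shows "mul_X_Y_XY dx dy c1 c2 c3 = mul_X_Y_XY dx dy c1' c2' c3'"
proof -
  have "c2 = c2'" "c1 = c1'" using assms[of 2 0] assms[of 0 2] by (simp_all add: mul_X_Y_XY_def)
  moreover from this have "c3 = c3'" using assms[of 1 1] by (simp add: mul_X_Y_XY_def)
  ultimately show ?thesis by simp
qed

text \<open>A competitor R' of order at most 1 leaves L - R' with the same second-order part as
  L - R; since that part determines the factors, R' = R.\<close>
lemma common_obstacle_X_Y_XY: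
  fixes dx dy :: "'a::field \<Rightarrow> 'a"
  assumes "is_derivation dx" "is_derivation dy"
    and R: "R = first_order_op r10 r01 r00"
    and L: "L - R = mul_X_Y_XY dx dy c1 c2 c3"
  shows "is_common_obstacle3 dx dy L symX symY symXY R"
  unfolding is_common_obstacle3_def has_factorization3_X_Y_XY_iff[OF assms(1,2)]
proof (intro conjI allI impI)
  show "op_fin R" unfolding R by (rule op_fin_first_order_op)
  show "\<exists>c1 c2 c3. L - R = mul_X_Y_XY dx dy c1 c2 c3" using L by blast
  fix R' assume "op_fin R' \<and> (\<exists>c1 c2 c3. L - R' = mul_X_Y_XY dx dy c1 c2 c3)"
  then obtain c1' c2' c3' where fin': "op_fin R'" and L': "L - R' = mul_X_Y_XY dx dy c1' c2' c3'"
    by blast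
  have ord_R: "op_ord R \<le> 1"
    using op_ord_le_bound[OF op_fin_first_order_op, of r10 r01 r00 1] unfolding R
    by (fastforce simp: first_order_op_def one_ereal_def split: if_splits)
  show "op_ord R \<le> op_ord R'"
  proof (cases "\<exists>i j. i + j = 2 \<and> R' i j \<noteq> 0")
    case True
    then obtain i j where "i + j = 2" "R' i j \<noteq> 0" by blast
    then have "2 \<le> op_ord R'" using op_ord_ge_coeff[OF fin'] by (fastforce simp: numeral_2_eq_2)
    moreover have "(1::ereal) \<le> 2" by simp
    ultimately show ?thesis using ord_R by (meson order_trans)
  next
    case False
    have "R i j = 0" if "i + j = 2" for i j
      using that by (auto simp: R first_order_op_def)
    then have "mul_X_Y_XY dx dy c1 c2 c3 i j = mul_X_Y_XY dx dy c1' c2' c3' i j" if "i + j = 2" for i j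
      using that False fun_cong[OF fun_cong[OF L], of i j] fun_cong[OF fun_cong[OF L'], of i j]
      by auto
    then have "L - R = L - R'"
      using L L' mul_X_Y_XY_eq_if_second_order_eq by metis
    then have "R' = R" by (simp add: fun_eq_iff)
    then show ?thesis by simp
  qed
qed

theorem mainTheorem14:
  fixes dx dy :: "'a::field \<Rightarrow> 'a"
    and a20 a11 a02 a10 a01 a00 :: 'a
  assumes "is_derivation dx" and "is_derivation dy"
    and "\<forall>f. dx (dy f) = dy (dx f)"
  shows "let s2 = a20 - a11 + a02;
             L = (\<lambda>i j. if (i, j) = (2, 1) then 1 else if (i, j) = (1, 2) then 1
                   else if (i, j) = (2, 0) then a20 else if (i, j) = (1, 1) then a11
                   else if (i, j) = (0, 2) then a02 else if (i, j) = (1, 0) then a10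
                   else if (i, j) = (0, 1) then a01 else if (i, j) = (0, 0) then a00 else 0);
             R = (\<lambda>i j. if (i, j) = (1, 0) then
                     a10 - a20 * a11 + a20 ^ 2 - dx a20 + dy s2
                   else if (i, j) = (0, 1) then
                     a01 - a02 * a11 + a02 ^ 2 + dx (a02 - a11)
                   else if (i, j) = (0, 0) then
                     a00 + a20 * a02 * s2 + s2 * dx a20 + a20 * dx s2 + dx (dy s2) + a02 * dy s2
                   else 0)
         in is_common_obstacle3 dx dy L symX symY symXY R"
  unfolding Let_def
  by (rule common_obstacle_X_Y_XY[OF assms(1,2), where ?c1.0 = a02 and ?c2.0 = a20
      and ?c3.0 = "- (a20 - a11 + a02)"], simp add: first_order_op_def)
    (auto simp: fun_eq_iff mul_X_Y_XY_def derivation_simps assms(1,2) algebra_simps power2_eq_square)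

end
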